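(* Let $r\geq 2$, let $\mathcal{G}$ and $\mathcal{H}$ be $r$-uniform hypergraphs with $u\in V(\mathcal{G})$ and $v\in V(\mathcal{H})$, and let $m$ be a positive integer. Then $\varphi\big((\mathcal{G}_u\cdot m\mathcal{H}_v)\cup(m-1)\mathcal{G},x\big)=\varphi\big((\mathcal{H}_v\cdot m\mathcal{G}_u)\cup(m-1)\mathcal{H},x\big)$.
   Context: For an $r$-uniform hypergraph $\mathcal{K}$ on $n$ vertices, $m(\mathcal{K},k)$ is the number of sets of $k$ pairwise disjoint edges ($m(\mathcal{K},0)=1$) and $\varphi(\mathcal{K},x)=\sum_{k\geq0}(-1)^km(\mathcal{K},k)x^{n-kr}$ is the matching polynomial. $\cup$ denotes disjoint union and $k\mathcal{G}$ the disjoint union of $k$ copies of $\mathcal{G}$ ($0\mathcal{G}$ is empty). $\mathcal{G}_u\cdot m\mathcal{H}_v$ is the hypergraph obtained from $\mathcal{G}$ and $m$ disjoint copies of $\mathcal{H}$ by adding $m$ new edges $e_1,\dots,e_m$, where $e_i=\{v_{i,1},\dots,v_{i,r}\}$, $v_{i,1}$ is identified with $u$, $v_{i,r}$ is identified with the vertex $v$ of the $i$-th copy of $\mathcal{H}$, and $v_{i,2},\dots,v_{i,r-1}$ are new vertices (all distinct). $\mathcal{H}_v\cdot m\mathcal{G}_u$ is defined analogously with the roles of $(\mathcal{G},u)$ and $(\mathcal{H},v)$ exchanged. *)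

theory Defs
  imports "HOL-Computational_Algebra.Polynomial"
begin

type_synonym 'a hg = "'a set \<times> 'a set set"

definition verts :: "'a hg \<Rightarrow> 'a set" where "verts K = fst K"
definition edges :: "'a hg \<Rightarrow> 'a set set" where "edges K = snd K"

definition uniform_hg :: "nat \<Rightarrow> 'a hg \<Rightarrow> bool" where
  "uniform_hg r K \<longleftrightarrow> finite (verts K) \<and> (\<forall>e\<in>edges K. e \<subseteq> verts K \<and> card e = r)"

definition num_matchings :: "'a hg \<Rightarrow> nat \<Rightarrow> nat" where
  "num_matchings K k = card {M. M \<subseteq> edges K \<and> card M = k \<and> pairwise disjnt M}"

text \<open>Matching polynomial of an r-uniform hypergraph (terms with k > |E| vanish).\<close>
definition match_poly :: "nat \<Rightarrow> 'a hg \<Rightarrow> int poly" where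
  "match_poly r K = (\<Sum>k\<in>{0..card (edges K)}.
      monom ((-1) ^ k * int (num_matchings K k)) (card (verts K) - k * r))"

definition hg_union :: "'a hg \<Rightarrow> 'b hg \<Rightarrow> ('a + 'b) hg" where
  "hg_union K L = (Inl ` verts K \<union> Inr ` verts L,
                   (\<lambda>e. Inl ` e) ` edges K \<union> (\<lambda>e. Inr ` e) ` edges L)"

definition hg_copies :: "nat \<Rightarrow> 'a hg \<Rightarrow> (nat \<times> 'a) hg" where
  "hg_copies k K = ({0..<k} \<times> verts K,
                    {(\<lambda>x. (i, x)) ` e | i e. i < k \<and> e \<in> edges K})"

text \<open>G_u . m H_v: vertices Inl (Inl x) for x in G, Inl (Inr (i,y)) for y in the
  i-th copy of H (i < m), and Inr (i,j) for the new vertices v_{i,2..r-1} of edge e_i.\<close>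
definition attach :: "nat \<Rightarrow> 'a hg \<Rightarrow> 'a \<Rightarrow> nat \<Rightarrow> 'b hg \<Rightarrow> 'b \<Rightarrow> (('a + (nat \<times> 'b)) + (nat \<times> nat)) hg" where
  "attach r G u m H v =
    (Inl ` Inl ` verts G \<union> Inl ` Inr ` ({0..<m} \<times> verts H) \<union> Inr ` ({0..<m} \<times> {2..r-1}),
     (\<lambda>e. Inl ` Inl ` e) ` edges G
     \<union> {Inl ` Inr ` (\<lambda>y. (i, y)) ` e | i e. i < m \<and> e \<in> edges H}
     \<union> {{Inl (Inl u), Inl (Inr (i, v))} \<union> Inr ` ({i} \<times> {2..r-1}) | i. i < m})"

end

theory Submission
  imports Defs
begin

(* The matching generating function g(E), the sum of X^|M| over the matchings M of an edge set E,
   is invariant under relabelling, multiplicative over vertex-disjoint unions, and together with the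
   number of vertices it determines the matching polynomial. All m new edges of G_u . mH_v contain u,
   so a matching uses at most one of them, and the edges disjoint from e_i are those of G - u, of
   H - v in the i-th copy and of the other m - 1 copies of H:
     g(G_u . mH_v) = g(G) g(H)^m + m X g(G - u) g(H - v) g(H)^(m-1).
   The m - 1 extra copies of G contribute g(G)^(m-1), which makes the result symmetric in (G,u) and
   (H,v); the vertex counts m (|G| + |H| + r - 2) agree as well. *)

definition matchings :: "'a set set \<Rightarrow> 'a set set set" where
  "matchings E = {M. M \<subseteq> E \<and> pairwise disjnt M}"

definition matching_gf :: "'a set set \<Rightarrow> nat poly" where
  "matching_gf E = (\<Sum>M\<in>matchings E. monom 1 (card M))"

lemma finite_matchings: "finite E \<Longrightarrow> finite (matchings E)"
  unfolding matchings_def by (rule finite_subset[of _ "Pow E"]) auto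

lemma coeff_matching_gf:
  assumes "finite (edges K)"
  shows "coeff (matching_gf (edges K)) k = num_matchings K k"
proof -
  have "coeff (matching_gf (edges K)) k = (\<Sum>M\<in>matchings (edges K). if card M = k then 1 else 0)"
    unfolding matching_gf_def coeff_sum coeff_monom by simp
  also have "\<dots> = card {M \<in> matchings (edges K). card M = k}"
    using finite_matchings[OF assms] by (simp add: sum.inter_filter[symmetric])
  also have "{M \<in> matchings (edges K). card M = k}
      = {M. M \<subseteq> edges K \<and> card M = k \<and> pairwise disjnt M}"
    by (auto simp: matchings_def)
  finally show ?thesis
    unfolding num_matchings_def .
qed

lemma matching_gf_empty [simp]: "matching_gf {} = 1"
proof -
  have empty: "matchings {} = {{}}" by (auto simp: matchings_def)
  show ?thesis unfolding matching_gf_def empty by (simp add: monom_0 one_pCons)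
qed

lemma matching_gf_image:
  assumes "inj f"
  shows "matching_gf ((`) f ` E) = matching_gf E"
proof -
  have inj_img: "inj ((`) f)"
    using assms by (simp add: inj_def inj_image_eq_iff)
  have disjnt_img: "disjnt (f ` a) (f ` b) \<longleftrightarrow> disjnt a b" for a b
    using assms by (simp add: disjnt_def image_Int[symmetric])
  have "pairwise disjnt ((`) f ` M) \<longleftrightarrow> pairwise disjnt M" for M
    using inj_img by (simp add: pairwise_image disjnt_img pairwise_def inj_eq)
  then have "matchings ((`) f ` E) = (`) ((`) f) ` matchings E"
    by (auto simp: matchings_def subset_image_iff image_mono)
  moreover have "inj_on ((`) ((`) f)) (matchings E)"
    using inj_img by (simp add: inj_on_def inj_image_eq_iff)
  moreover have "card ((`) f ` M) = card M" for M
    using inj_img by (simp add: card_image inj_on_subset)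
  ultimately show ?thesis
    by (simp add: matching_gf_def sum.reindex)
qed

(* Without "{} \<notin> E" the empty edge could lie in both E and F and would be counted twice. *)
lemma matching_gf_Un:
  assumes "finite E" "finite F" "{} \<notin> E" and cross: "\<forall>a\<in>E. \<forall>b\<in>F. disjnt a b"
  shows "matching_gf (E \<union> F) = matching_gf E * matching_gf F"
proof -
  have "E \<inter> F = {}"
    using assms(3) cross by (metis disjoint_iff disjnt_self_iff_empty)
  have union_matching: "pairwise disjnt (A \<union> B)"
    if "A \<subseteq> E" "B \<subseteq> F" "pairwise disjnt A" "pairwise disjnt B" for A B
    using that cross unfolding pairwise_def by (blast intro: disjnt_sym)
  have bij: "bij_betw (\<lambda>(A, B). A \<union> B) (matchings E \<times> matchings F) (matchings (E \<union> F))"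
    by (rule bij_betw_byWitness[where f' = "\<lambda>M. (M \<inter> E, M \<inter> F)"])
      (use \<open>E \<inter> F = {}\<close> union_matching in \<open>auto simp: matchings_def intro: pairwise_subset\<close>)
  have card_Un: "card (A \<union> B) = card A + card B"
    if "(A, B) \<in> matchings E \<times> matchings F" for A B
    using that assms(1,2) \<open>E \<inter> F = {}\<close>
    by (intro card_Un_disjoint) (auto simp: matchings_def intro: finite_subset)
  have "matching_gf (E \<union> F)
      = (\<Sum>(A, B)\<in>matchings E \<times> matchings F. monom 1 (card (A \<union> B)))"
    unfolding matching_gf_def sum.reindex_bij_betw[OF bij, symmetric] by (simp add: case_prod_beta)
  also have "\<dots> = (\<Sum>(A, B)\<in>matchings E \<times> matchings F. monom 1 (card A) * monom 1 (card B))"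
    by (rule sum.cong) (auto simp: card_Un mult_monom)
  also have "\<dots> = matching_gf E * matching_gf F"
    by (simp add: matching_gf_def sum_product sum.cartesian_product)
  finally show ?thesis .
qed

lemma matching_gf_insert:
  assumes "finite E" "e \<notin> E" "e \<noteq> {}"
  shows "matching_gf (insert e E) = matching_gf E + monom 1 1 * matching_gf {f \<in> E. disjnt f e}"
proof -
  let ?D = "{f \<in> E. disjnt f e}"
  have split: "matchings (insert e E) = matchings E \<union> insert e ` matchings ?D"
  proof (intro equalityI subsetI)
    fix M assume "M \<in> matchings (insert e E)"
    then show "M \<in> matchings E \<union> insert e ` matchings ?D"
      by (cases "e \<in> M")
        (auto simp: matchings_def pairwise_def image_iff intro!: exI[of _ "M - {e}"])
  next
    fix M assume "M \<in> matchings E \<union> insert e ` matchings ?D"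
    then show "M \<in> matchings (insert e E)"
    proof
      assume "M \<in> insert e ` matchings ?D"
      then obtain N where N: "N \<subseteq> ?D" "pairwise disjnt N" "M = insert e N"
        by (auto simp: matchings_def)
      then have "pairwise disjnt (insert e N)"
        unfolding pairwise_insert by (blast intro: disjnt_sym)
      then show ?thesis using N by (auto simp: matchings_def)
    qed (auto simp: matchings_def)
  qed
  have "matchings E \<inter> insert e ` matchings ?D = {}"
    using assms(2) by (auto simp: matchings_def)
  moreover have e_notin: "e \<notin> M" if "M \<in> matchings ?D" for M
    using that assms(3) by (auto simp: matchings_def)
  then have "inj_on (insert e) (matchings ?D)"
    by (meson inj_onI insert_ident)
  moreover have "card (insert e M) = Suc (card M)" if "M \<in> matchings ?D" for M
  proof -
    have "finite M"
      using that assms(1) by (auto simp: matchings_def intro: finite_subset)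
    then show ?thesis using e_notin[OF that] by simp
  qed
  ultimately show ?thesis
    using assms(1)
    by (simp add: matching_gf_def split sum.union_disjoint finite_matchings sum.reindex
        sum_distrib_left mult_monom)
qed

lemma matching_gf_Un_intersecting:
  assumes "finite E" "finite B" "E \<inter> B = {}" "\<forall>b\<in>B. \<forall>c\<in>B. \<not> disjnt b c"
  shows "matching_gf (E \<union> B)
       = matching_gf E + monom 1 1 * (\<Sum>b\<in>B. matching_gf {f \<in> E. disjnt f b})"
  using assms(2-)
proof (induction B rule: finite_induct)
  case (insert b B)
  have "{f \<in> E \<union> B. disjnt f b} = {f \<in> E. disjnt f b}"
    using insert.prems(2) by auto
  moreover have "b \<notin> E \<union> B" "b \<noteq> {}"
    using insert.hyps(2) insert.prems by auto
  ultimately have "matching_gf (E \<union> insert b B)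
      = matching_gf (E \<union> B) + monom 1 1 * matching_gf {f \<in> E. disjnt f b}"
    using matching_gf_insert[of "E \<union> B" b] assms(1) insert.hyps(1) by simp
  then show ?case
    using insert by (simp add: algebra_simps)
qed simp

lemma matching_gf_UN_tagged:
  assumes "finite I" "\<And>i. i \<in> I \<Longrightarrow> finite (E i)" "\<And>i. i \<in> I \<Longrightarrow> {} \<notin> E i"
  shows "matching_gf (\<Union>i\<in>I. (`) (Pair i) ` E i) = (\<Prod>i\<in>I. matching_gf (E i))"
  using assms
proof (induction I rule: finite_induct)
  case (insert j I)
  have "matching_gf (\<Union>i\<in>insert j I. (`) (Pair i) ` E i)
      = matching_gf ((`) (Pair j) ` E j) * matching_gf (\<Union>i\<in>I. (`) (Pair i) ` E i)"
    unfolding UN_insert using insert by (intro matching_gf_Un) (auto simp: disjnt_def)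
  moreover have "matching_gf ((`) (Pair j) ` E j) = matching_gf (E j)"
    by (rule matching_gf_image) (simp add: inj_def)
  ultimately show ?case
    using insert by simp
qed simp

lemma matching_gf_Plus:
  assumes "finite E" "finite F" "{} \<notin> E"
  shows "matching_gf ((`) Inl ` E \<union> (`) Inr ` F) = matching_gf E * matching_gf F"
proof -
  have "matching_gf ((`) Inl ` E \<union> (`) Inr ` F)
      = matching_gf ((`) Inl ` E :: ('a + 'b) set set) * matching_gf ((`) Inr ` F :: ('a + 'b) set set)"
    using assms by (intro matching_gf_Un) (auto simp: disjnt_def)
  then show ?thesis
    by (simp add: matching_gf_image)
qed

lemma edges_hg_union:
  "edges (hg_union K L) = (`) Inl ` edges K \<union> (`) Inr ` edges L"
  by (simp add: hg_union_def edges_def)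

lemma edges_hg_copies: "edges (hg_copies k K) = (\<Union>i<k. (`) (Pair i) ` edges K)"
  by (auto simp: hg_copies_def edges_def)

lemma finite_edges_hg_copies: "finite (edges K) \<Longrightarrow> finite (edges (hg_copies k K))"
  by (simp add: edges_hg_copies)

lemma matching_gf_hg_union:
  assumes "finite (edges K)" "finite (edges L)" "{} \<notin> edges K"
  shows "matching_gf (edges (hg_union K L)) = matching_gf (edges K) * matching_gf (edges L)"
  using assms by (simp add: edges_hg_union matching_gf_Plus)

lemma matching_gf_hg_copies:
  assumes "finite (edges K)" "{} \<notin> edges K"
  shows "matching_gf (edges (hg_copies k K)) = matching_gf (edges K) ^ k"
  using assms by (simp add: edges_hg_copies matching_gf_UN_tagged)

lemma matching_gf_hg_union_avoiding:
  assumes "finite (edges K)" "finite (edges L)" "{} \<notin> edges K"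
  shows "matching_gf {f \<in> edges (hg_union K L). Inl x \<notin> f \<and> Inr y \<notin> f}
       = matching_gf {e \<in> edges K. x \<notin> e} * matching_gf {e \<in> edges L. y \<notin> e}"
proof -
  have "{f \<in> edges (hg_union K L). Inl x \<notin> f \<and> Inr y \<notin> f}
      = (`) Inl ` {e \<in> edges K. x \<notin> e} \<union> (`) Inr ` {e \<in> edges L. y \<notin> e}"
    by (auto simp: edges_hg_union)
  then show ?thesis
    using assms by (simp add: matching_gf_Plus)
qed

lemma matching_gf_hg_copies_avoiding:
  assumes "finite (edges K)" "{} \<notin> edges K" "i < k"
  shows "matching_gf {f \<in> edges (hg_copies k K). (i, x) \<notin> f}
       = matching_gf {e \<in> edges K. x \<notin> e} * matching_gf (edges K) ^ (k - 1)"
proof -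
  let ?E = "\<lambda>j. if j = i then {e \<in> edges K. x \<notin> e} else edges K"
  have "{f \<in> (`) (Pair j) ` edges K. (i, x) \<notin> f} = (`) (Pair j) ` ?E j" for j
    by auto
  moreover have "{f \<in> edges (hg_copies k K). (i, x) \<notin> f}
      = (\<Union>j<k. {f \<in> (`) (Pair j) ` edges K. (i, x) \<notin> f})"
    by (auto simp: edges_hg_copies)
  ultimately have "matching_gf {f \<in> edges (hg_copies k K). (i, x) \<notin> f}
      = (\<Prod>j<k. matching_gf (?E j))"
    using assms by (simp add: matching_gf_UN_tagged)
  also have "\<dots> = (\<Prod>j<k. if j = i then matching_gf {e \<in> edges K. x \<notin> e}
                                else matching_gf (edges K))"
    by (rule prod.cong) simp_all
  finally show ?thesis
    using assms(3) by (simp add: prod_gen_delta)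
qed

definition bridge_edge :: "nat \<Rightarrow> 'a \<Rightarrow> 'b \<Rightarrow> nat \<Rightarrow> (('a + nat \<times> 'b) + nat \<times> nat) set" where
  "bridge_edge r u v i = {Inl (Inl u), Inl (Inr (i, v))} \<union> Inr ` ({i} \<times> {2..r-1})"

lemma edges_attach:
  "edges (attach r G u m H v)
     = (`) Inl ` edges (hg_union G (hg_copies m H)) \<union> bridge_edge r u v ` {..<m}"
  unfolding edges_hg_union edges_hg_copies
  by (auto simp: attach_def edges_def bridge_edge_def image_Un image_UN image_image)

lemma finite_edges_attach:
  "finite (edges G) \<Longrightarrow> finite (edges H) \<Longrightarrow> finite (edges (attach r G u m H v))"
  by (simp add: edges_attach edges_hg_union edges_hg_copies)

lemma empty_notin_edges_attach:
  "{} \<notin> edges G \<Longrightarrow> {} \<notin> edges H \<Longrightarrow> {} \<notin> edges (attach r G u m H v)"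
  by (auto simp: edges_attach edges_hg_union edges_hg_copies bridge_edge_def)

lemma disjnt_Inl_bridge_edge:
  "disjnt (Inl ` f) (bridge_edge r u v i) \<longleftrightarrow> Inl u \<notin> f \<and> Inr (i, v) \<notin> f"
  by (auto simp: bridge_edge_def disjnt_def)

lemma matching_gf_attach:
  assumes "finite (edges G)" "{} \<notin> edges G" "finite (edges H)" "{} \<notin> edges H"
  shows "matching_gf (edges (attach r G u m H v))
       = matching_gf (edges G) * matching_gf (edges H) ^ m
         + of_nat m * monom 1 1 * matching_gf {e \<in> edges G. u \<notin> e}
           * matching_gf {e \<in> edges H. v \<notin> e} * matching_gf (edges H) ^ (m - 1)"
proof -
  let ?U = "hg_union G (hg_copies m H)"
  let ?E = "(`) Inl ` edges ?U :: (('a + nat \<times> 'b) + nat \<times> nat) set set"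
  have fin_copies: "finite (edges (hg_copies m H))"
    using assms(3) by (rule finite_edges_hg_copies)
  then have fin_U: "finite (edges ?U)"
    using assms(1) by (simp add: edges_hg_union)
  have gf_E: "matching_gf ?E = matching_gf (edges G) * matching_gf (edges H) ^ m"
    using assms fin_copies
    by (simp add: matching_gf_image matching_gf_hg_union matching_gf_hg_copies)
  have gf_avoiding: "matching_gf {f \<in> ?E. disjnt f (bridge_edge r u v i)}
      = matching_gf {e \<in> edges G. u \<notin> e} * matching_gf {e \<in> edges H. v \<notin> e}
        * matching_gf (edges H) ^ (m - 1)" if "i < m" for i
  proof -
    have "{f \<in> ?E. disjnt f (bridge_edge r u v i)}
        = (`) Inl ` {f \<in> edges ?U. Inl u \<notin> f \<and> Inr (i, v) \<notin> f}"
      by (auto simp: disjnt_Inl_bridge_edge)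
    then show ?thesis
      using assms that fin_copies
      by (simp add: matching_gf_image matching_gf_hg_union_avoiding matching_gf_hg_copies_avoiding
          mult.assoc)
  qed
  have "?E \<inter> bridge_edge r u v ` {..<m} = {}"
    by (auto simp: bridge_edge_def edges_hg_union edges_hg_copies)
  moreover have "\<forall>b\<in>bridge_edge r u v ` {..<m}. \<forall>c\<in>bridge_edge r u v ` {..<m}. \<not> disjnt b c"
    by (auto simp: bridge_edge_def disjnt_def)
  ultimately have "matching_gf (edges (attach r G u m H v))
      = matching_gf ?E
        + monom 1 1 * (\<Sum>b\<in>bridge_edge r u v ` {..<m}. matching_gf {f \<in> ?E. disjnt f b})"
    unfolding edges_attach using fin_U by (intro matching_gf_Un_intersecting) auto
  moreover have "inj_on (bridge_edge r u v) {..<m}"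
    by (auto simp: inj_on_def bridge_edge_def)
  ultimately show ?thesis
    by (simp add: sum.reindex gf_E gf_avoiding mult_ac)
qed

lemma matching_gf_attach_copies:
  assumes "finite (edges G)" "{} \<notin> edges G" "finite (edges H)" "{} \<notin> edges H" "0 < m"
  shows "matching_gf (edges (hg_union (attach r G u m H v) (hg_copies (m - 1) G)))
       = (matching_gf (edges G) * matching_gf (edges H)) ^ m
         + of_nat m * monom 1 1 * matching_gf {e \<in> edges G. u \<notin> e}
           * matching_gf {e \<in> edges H. v \<notin> e}
           * (matching_gf (edges G) * matching_gf (edges H)) ^ (m - 1)"
proof -
  obtain n where m: "m = Suc n"
    using \<open>0 < m\<close> gr0_implies_Suc by blast
  have "finite (edges (attach r G u m H v))" "{} \<notin> edges (attach r G u m H v)"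
    "finite (edges (hg_copies (m - 1) G))"
    using assms(1-4) by (simp_all add: finite_edges_attach empty_notin_edges_attach
        finite_edges_hg_copies)
  then have "matching_gf (edges (hg_union (attach r G u m H v) (hg_copies (m - 1) G)))
      = matching_gf (edges (attach r G u m H v)) * matching_gf (edges G) ^ (m - 1)"
    using assms(1,2) by (simp add: matching_gf_hg_union matching_gf_hg_copies)
  also have "\<dots> = (matching_gf (edges G) * matching_gf (edges H)) ^ m
         + of_nat m * monom 1 1 * matching_gf {e \<in> edges G. u \<notin> e}
           * matching_gf {e \<in> edges H. v \<notin> e}
           * (matching_gf (edges G) * matching_gf (edges H)) ^ (m - 1)"
    using assms(1-4) by (simp add: matching_gf_attach m algebra_simps)
  finally show ?thesis .
qed

lemma card_verts_hg_union:
  "finite (verts K) \<Longrightarrow> finite (verts L)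
    \<Longrightarrow> card (verts (hg_union K L)) = card (verts K) + card (verts L)"
  by (simp add: hg_union_def verts_def card_Plus flip: Plus_def)

lemma card_verts_hg_copies: "card (verts (hg_copies k K)) = k * card (verts K)"
  by (simp add: hg_copies_def verts_def card_cartesian_product)

lemma card_verts_attach:
  assumes "finite (verts G)" "finite (verts H)"
  shows "card (verts (attach r G u m H v)) = card (verts G) + m * card (verts H) + m * (r - 2)"
proof -
  have "verts (attach r G u m H v) = (verts G <+> {0..<m} \<times> verts H) <+> {0..<m} \<times> {2..r-1}"
    by (simp add: attach_def verts_def Plus_def image_Un)
  then show ?thesis
    using assms by (simp add: card_Plus card_cartesian_product numeral_2_eq_2)
qed

lemma card_verts_attach_copies:
  assumes "finite (verts G)" "finite (verts H)" "0 < m"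
  shows "card (verts (hg_union (attach r G u m H v) (hg_copies (m - 1) G)))
       = m * (card (verts G) + card (verts H) + (r - 2))"
proof -
  have "finite (verts (attach r G u m H v))" "finite (verts (hg_copies (m - 1) G))"
    using assms(1,2) by (simp_all add: attach_def hg_copies_def verts_def)
  moreover obtain n where "m = Suc n"
    using \<open>0 < m\<close> gr0_implies_Suc by blast
  ultimately show ?thesis
    using assms(1,2)
    by (simp add: card_verts_hg_union card_verts_attach card_verts_hg_copies algebra_simps)
qed

lemma uniform_hg_finite_edges: "uniform_hg r K \<Longrightarrow> finite (edges K)"
  unfolding uniform_hg_def by (meson Pow_iff finite_Pow_iff finite_subset subsetI)

lemma uniform_hg_empty_notin_edges: "uniform_hg r K \<Longrightarrow> 0 < r \<Longrightarrow> {} \<notin> edges K"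
  unfolding uniform_hg_def by fastforce

lemma match_poly_eq_sum:
  assumes "finite (edges K)" "card (edges K) \<le> N"
  shows "match_poly r K
       = (\<Sum>k = 0..N. monom ((-1) ^ k * int (coeff (matching_gf (edges K)) k)) (card (verts K) - k * r))"
proof -
  have vanish: "num_matchings K k = 0" if "card (edges K) < k" for k
  proof -
    have "{M. M \<subseteq> edges K \<and> card M = k \<and> pairwise disjnt M} = {}"
      using that by (auto dest: card_mono[OF assms(1)])
    then show ?thesis
      unfolding num_matchings_def by (simp only: card.empty)
  qed
  show ?thesis
    unfolding match_poly_def coeff_matching_gf[OF assms(1)]
    by (rule sum.mono_neutral_left) (use assms(2) vanish in auto)
qed

lemma match_poly_eqI:
  assumes "finite (edges K)" "finite (edges L)"
    and "card (verts K) = card (verts L)" "matching_gf (edges K) = matching_gf (edges L)"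
  shows "match_poly r K = match_poly r L"
  using assms match_poly_eq_sum[of K "card (edges K) + card (edges L)"]
    match_poly_eq_sum[of L "card (edges K) + card (edges L)"]
  by simp

theorem lemma9:
  fixes G :: "'a hg" and H :: "'b hg" and u :: 'a and v :: 'b and r m :: nat
  assumes "r \<ge> 2"
    and "uniform_hg r G" and "uniform_hg r H"
    and "u \<in> verts G" and "v \<in> verts H"
    and "m > 0"
  shows "match_poly r (hg_union (attach r G u m H v) (hg_copies (m - 1) G))
       = match_poly r (hg_union (attach r H v m G u) (hg_copies (m - 1) H))"
proof (rule match_poly_eqI)
  have fin: "finite (verts G)" "finite (verts H)" "finite (edges G)" "finite (edges H)"
    using assms(2,3) uniform_hg_finite_edges unfolding uniform_hg_def by blast+
  have nonempty: "{} \<notin> edges G" "{} \<notin> edges H"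
    using assms(1-3) by (simp_all add: uniform_hg_empty_notin_edges)
  show "finite (edges (hg_union (attach r G u m H v) (hg_copies (m - 1) G)))"
    "finite (edges (hg_union (attach r H v m G u) (hg_copies (m - 1) H)))"
    using fin by (simp_all add: edges_hg_union finite_edges_attach finite_edges_hg_copies)
  show "card (verts (hg_union (attach r G u m H v) (hg_copies (m - 1) G)))
      = card (verts (hg_union (attach r H v m G u) (hg_copies (m - 1) H)))"
    using card_verts_attach_copies[OF fin(1,2) \<open>m > 0\<close>, of r u v]
      card_verts_attach_copies[OF fin(2,1) \<open>m > 0\<close>, of r v u]
    by simp
  show "matching_gf (edges (hg_union (attach r G u m H v) (hg_copies (m - 1) G)))
      = matching_gf (edges (hg_union (attach r H v m G u) (hg_copies (m - 1) H)))"
    using matching_gf_attach_copies[OF fin(3) nonempty(1) fin(4) nonempty(2) \<open>m > 0\<close>, of r u v]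
      matching_gf_attach_copies[OF fin(4) nonempty(2) fin(3) nonempty(1) \<open>m > 0\<close>, of r v u]
    by (simp add: mult_ac)
qed

end
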